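(* Let $\mathcal{P}\subseteq\mathbb{R}^{m\times m}$ and $n\ge1$. For a family $\{P_{i,j}\}_{i,j\in[n]}$ of $m\times m$ matrices, let $\mathbf{P}\in\mathbb{R}^{nm\times nm}$ be the block matrix whose $(i,j)$-th block is $P_{i,j}$. Let $$S''=\{\{P_{i,j}\}_{i,j\in[n]}:\operatorname{rank}(\mathbf{P})=m,\ P_{i,j}\in\mathcal{P}\ \forall i,j\in[n],\ P_{i,i}=I\ \forall i\in[n]\},$$ and let $S$ be the set of families $\{P_{i,j}\}_{i,j\in[n]}$ with $P_{i,j}\in\mathcal{P}$, $P_{i,k}P_{k,j}=P_{i,j}$ for all $i,j,k\in[n]$, and $P_{i,i}=I$ for all $i\in[n]$. Then $S''=S$.
   Context: $[n]=\{1,\dots,n\}$. *)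

theory Defs
  imports "HOL-Analysis.Analysis"
begin

definition block_matrix :: "('n::finite \<Rightarrow> 'n \<Rightarrow> real^'m::finite^'m) \<Rightarrow> real^('n \<times> 'm)^('n \<times> 'm)" where
  "block_matrix P = (\<chi> r. \<chi> c. P (fst r) (fst c) $ snd r $ snd c)"

end

theory Submission
  imports Defs
begin

text \<open>Suppose \<open>P k k = I\<close>. The rows of the \<open>k\<close>-th block row \<open>[P k 1 | \<dots> | P k n]\<close> are then
linearly independent, so they span an \<open>m\<close>-dimensional subspace \<open>W\<close> of the row space of the
block matrix. Hence the rank is \<open>m\<close> iff every row of the block matrix lies in \<open>W\<close>. Row \<open>(i, a)\<close>
equals \<open>x\<^sup>T [P k 1 | \<dots> | P k n]\<close> iff \<open>x\<close> is row \<open>a\<close> of \<open>P i k\<close> (read off in block \<open>k\<close>) and row \<open>a\<close>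
of \<open>P i j\<close> is row \<open>a\<close> of \<open>P i k P k j\<close> for every \<open>j\<close>; so this happens for all rows iff
\<open>P i k P k j = P i j\<close> for all \<open>i, j\<close>.\<close>

definition block_row_comb ::
    "('n::finite \<Rightarrow> 'n \<Rightarrow> real^'m::finite^'m) \<Rightarrow> 'n \<Rightarrow> real^'m \<Rightarrow> real^('n \<times> 'm)" where
  "block_row_comb P k x = (\<chi> r. (x v* P k (fst r)) $ snd r)"

lemma block_row_comb_component [simp]: "block_row_comb P k x $ (j, e) = (x v* P k j) $ e"
  by (simp add: block_row_comb_def)

lemma linear_block_row_comb: "linear (block_row_comb P k)"
  by (rule linearI) (simp_all add: vec_eq_iff vector_matrix_mult_def algebra_simps sum.distrib sum_distrib_left)

lemma block_matrix_component [simp]: "block_matrix P $ (i, a) $ (j, e) = P i j $ a $ e"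
  by (simp add: block_matrix_def)

lemma axis_vector_matrix_mult: "axis a 1 v* A = A $ a"
  by (simp add: vec_eq_iff vector_matrix_mult_def axis_def if_distrib if_distribR cong del: if_weak_cong)

lemma matrix_matrix_mult_nth: "(A ** B) $ a = A $ a v* B"
  by (simp add: vec_eq_iff vector_matrix_mult_def matrix_matrix_mult_def)

lemma row_block_matrix: "row (i, a) (block_matrix P) = block_row_comb P i (axis a 1)"
  by (simp add: vec_eq_iff axis_vector_matrix_mult row_def)

lemma block_row_comb_eq_sum_rows:
  "block_row_comb P k x = (\<Sum>b\<in>UNIV. x $ b *\<^sub>R row (k, b) (block_matrix P))"
proof -
  have "block_row_comb P k x = block_row_comb P k (\<Sum>b\<in>UNIV. x $ b *\<^sub>R axis b 1)"
    using basis_expansion[of x] by (simp add: scalar_mult_eq_scaleR)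
  also have "\<dots> = (\<Sum>b\<in>UNIV. x $ b *\<^sub>R row (k, b) (block_matrix P))"
    by (simp add: linear_sum[OF linear_block_row_comb] linear_scale[OF linear_block_row_comb] row_block_matrix)
  finally show ?thesis .
qed

lemma range_block_row_comb_subset_span_rows:
  "range (block_row_comb P k) \<subseteq> span (rows (block_matrix P))"
proof
  fix v assume "v \<in> range (block_row_comb P k)"
  then obtain x where "v = block_row_comb P k x" by blast
  then have "v = (\<Sum>b\<in>UNIV. x $ b *\<^sub>R row (k, b) (block_matrix P))"
    by (simp add: block_row_comb_eq_sum_rows)
  also have "\<dots> \<in> span (rows (block_matrix P))"
    by (intro span_sum span_scale span_base) (auto simp: rows_def)
  finally show "v \<in> span (rows (block_matrix P))" .
qed

lemma inj_block_row_comb: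
  assumes "P k k = mat 1"
  shows "inj (block_row_comb P k)"
proof (rule injI)
  fix x y assume "block_row_comb P k x = block_row_comb P k y"
  then have "block_row_comb P k x $ (k, e) = block_row_comb P k y $ (k, e)" for e by simp
  then show "x = y" using assms by (simp add: vec_eq_iff)
qed

lemma dim_range_block_row_comb:
  fixes P :: "'n::finite \<Rightarrow> 'n \<Rightarrow> real^'m::finite^'m"
  assumes "P k k = mat 1"
  shows "dim (range (block_row_comb P k)) = CARD('m)"
  using dim_image_eq[OF linear_block_row_comb inj_on_subset[OF inj_block_row_comb[of P k]]] assms by simp

lemma rows_subset_range_block_row_comb_iff:
  assumes "P k k = mat 1"
  shows "rows (block_matrix P) \<subseteq> range (block_row_comb P k) \<longleftrightarrow> (\<forall>i j. P i k ** P k j = P i j)"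
proof
  assume rows: "rows (block_matrix P) \<subseteq> range (block_row_comb P k)"
  show "\<forall>i j. P i k ** P k j = P i j"
  proof (intro allI)
    fix i j
    have "(P i k ** P k j) $ a = P i j $ a" for a
    proof -
      obtain x where x: "row (i, a) (block_matrix P) = block_row_comb P k x"
        using rows by (auto simp: rows_def)
      have block: "P i l $ a = x v* P k l" for l
      proof -
        have "P i l $ a $ e = (x v* P k l) $ e" for e
          using arg_cong[OF x, of "\<lambda>v. v $ (l, e)"] by (simp add: row_def)
        then show ?thesis by (simp add: vec_eq_iff)
      qed
      from block[of k] assms have "x = P i k $ a" by simp
      with block[of j] show ?thesis by (simp add: matrix_matrix_mult_nth)
    qed
    then show "P i k ** P k j = P i j" by (simp add: vec_eq_iff)
  qed
next
  assume "\<forall>i j. P i k ** P k j = P i j"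
  then have "row (i, a) (block_matrix P) = block_row_comb P k (P i k $ a)" for i a
    by (simp add: vec_eq_iff row_def flip: matrix_matrix_mult_nth)
  then show "rows (block_matrix P) \<subseteq> range (block_row_comb P k)"
    by (auto simp: rows_def)
qed

lemma rank_block_matrix_eq_iff_rows_subset:
  fixes P :: "'n::finite \<Rightarrow> 'n \<Rightarrow> real^'m::finite^'m"
  assumes "P k k = mat 1"
  shows "rank (block_matrix P) = CARD('m) \<longleftrightarrow> rows (block_matrix P) \<subseteq> range (block_row_comb P k)"
proof -
  let ?R = "rows (block_matrix P)" and ?W = "range (block_row_comb P k)"
  have W: "subspace ?W"
    by (rule linear_subspace_image[OF linear_block_row_comb subspace_UNIV])
  have "rank (block_matrix P) = CARD('m) \<longleftrightarrow> ?W = span ?R"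
  proof
    assume "rank (block_matrix P) = CARD('m)"
    then show "?W = span ?R"
      using subspace_dim_equal[OF W subspace_span range_block_row_comb_subset_span_rows]
        dim_range_block_row_comb[of P k] assms by (simp add: row_rank_def)
  next
    assume "?W = span ?R"
    then show "rank (block_matrix P) = CARD('m)"
      using dim_range_block_row_comb[of P k] assms by (metis dim_span row_rank_def)
  qed
  also have "\<dots> \<longleftrightarrow> ?R \<subseteq> ?W"
    using W range_block_row_comb_subset_span_rows span_minimal span_superset by blast
  finally show ?thesis .
qed

theorem lemma14:
  fixes PP :: "(real^'m::finite^'m) set"
  shows "{P :: 'n::finite \<Rightarrow> 'n \<Rightarrow> real^'m^'m.
            rank (block_matrix P) = CARD('m) \<and> (\<forall>i j. P i j \<in> PP) \<and> (\<forall>i. P i i = mat 1)}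
       = {P :: 'n \<Rightarrow> 'n \<Rightarrow> real^'m^'m.
            (\<forall>i j. P i j \<in> PP) \<and> (\<forall>i j k. P i k ** P k j = P i j) \<and> (\<forall>i. P i i = mat 1)}"
proof -
  have "rank (block_matrix P) = CARD('m) \<longleftrightarrow> (\<forall>i j k. P i k ** P k j = P i j)"
    if "\<forall>i. P i i = mat 1" for P :: "'n \<Rightarrow> 'n \<Rightarrow> real^'m^'m"
  proof -
    have "rank (block_matrix P) = CARD('m) \<longleftrightarrow> (\<forall>i j. P i k ** P k j = P i j)" for k
      using that rank_block_matrix_eq_iff_rows_subset rows_subset_range_block_row_comb_iff by blast
    then show ?thesis by blast
  qed
  then show ?thesis by blast
qed

end
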